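(* Let $(U_n)_{n\in\mathbb{Z}}$ satisfy $U_n\in\mathcal{S}$ for all $n$ and $U_n=I_2$ for all $|n|\ge N_0$, where $N_0\ge1$ is an integer, and let $\mathcal{U}$ be the associated quantum walk evolution. Let $\Psi^{(1)},\Psi^{(2)}\in\mathcal{B}$ be defined by $\Psi^{(1)}(N_0)=(1,0)^T$, $\Psi^{(1)}(n)=0$ for $n\ne N_0$, and $\Psi^{(2)}(-N_0)=(0,1)^T$, $\Psi^{(2)}(n)=0$ for $n\neq -N_0$. Then there exist constants $C>0$ and $0<M<1$ such that for $k=1,2$, $$\|(\mathcal{U}^L\Psi^{(k)})(n)\|_{\mathbb{C}^2}\le C\,L^{2N_0-1}M^L$$ for all $|n|\le N_0$ and all $L\in\mathbb{N}$.
   Context: $\mathcal{S}:=\{M=(m_{jk})\in U(2): m_{11}=m_{22}\neq 0\}$. For each $n$ set $P_n:=\begin{pmatrix}1&0\\0&0\end{pmatrix}U_n$, $Q_n:=\begin{pmatrix}0&0\\0&1\end{pmatrix}U_n$. The state space is $\mathcal{B}=\ell^\infty(\mathbb{Z};\mathbb{C}^2)$ of bounded sequences $\Psi=(\Psi(n))_{n\in\mathbb{Z}}$ with $\Psi(n)\in\mathbb{C}^2$ (column vectors), and the evolution $\mathcal{U}:\mathcal{B}\to\mathcal{B}$ is $(\mathcal{U}\Psi)(n)=P_{n+1}\Psi(n+1)+Q_{n-1}\Psi(n-1)$. *)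

theory Defs
  imports "HOL-Analysis.Analysis"
begin

definition adj2 :: "complex^2^2 \<Rightarrow> complex^2^2" where
  "adj2 M = (\<chi> i j. cnj (M $ j $ i))"

definition U2 :: "(complex^2^2) set" where
  "U2 = {M. M ** adj2 M = mat 1 \<and> adj2 M ** M = mat 1}"

definition classS :: "(complex^2^2) set" where
  "classS = {M \<in> U2. M $ 1 $ 1 = M $ 2 $ 2 \<and> M $ 1 $ 1 \<noteq> 0}"

definition projP :: "complex^2^2" where
  "projP = (\<chi> i j. if i = 1 \<and> j = 1 then 1 else 0)"

definition projQ :: "complex^2^2" where
  "projQ = (\<chi> i j. if i = 2 \<and> j = 2 then 1 else 0)"

definition Pmat :: "(int \<Rightarrow> complex^2^2) \<Rightarrow> int \<Rightarrow> complex^2^2" where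
  "Pmat U n = projP ** U n"

definition Qmat :: "(int \<Rightarrow> complex^2^2) \<Rightarrow> int \<Rightarrow> complex^2^2" where
  "Qmat U n = projQ ** U n"

text \<open>The quantum walk evolution (defined on all sequences; it maps bounded sequences
  to bounded sequences, and agrees with the evolution on \<open>\<ell>^\<infinity>\<close>).\<close>
definition qw_evol :: "(int \<Rightarrow> complex^2^2) \<Rightarrow> (int \<Rightarrow> complex^2) \<Rightarrow> (int \<Rightarrow> complex^2)" where
  "qw_evol U \<Psi> = (\<lambda>n. Pmat U (n+1) *v \<Psi> (n+1) + Qmat U (n-1) *v \<Psi> (n-1))"

definition psi1 :: "nat \<Rightarrow> int \<Rightarrow> complex^2" where
  "psi1 N0 = (\<lambda>n. if n = int N0 then vector [1, 0] else 0)"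

definition psi2 :: "nat \<Rightarrow> int \<Rightarrow> complex^2" where
  "psi2 N0 = (\<lambda>n. if n = - int N0 then vector [0, 1] else 0)"

end

theory Submission
  imports Defs "Jordan_Normal_Form.Spectral_Radius"
begin

text \<open>Since \<open>U n = I\<close> outside the box \<open>\<bar>n\<bar> \<le> N0\<close>, nothing that has left the box comes
  back, so on the box the walk started from \<open>psi1\<close> or \<open>psi2\<close> is driven by a finite transfer
  matrix \<open>T\<close>. Every eigenvalue \<open>z\<close> of \<open>T\<close> has \<open>\<bar>z\<bar> < 1\<close>: unitarity conserves the
  squared norm, so an eigenstate keeps only the fraction \<open>\<bar>z\<bar>\<^sup>2\<close> of its mass in the box,
  and for \<open>\<bar>z\<bar> = 1\<close> nothing may leak through the right edge, which together with the nonzero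
  diagonal entries of the coins forces the eigenstate to vanish. Hence the spectral radius
  of \<open>T\<close> is below some \<open>M < 1\<close> and the entries of \<open>T\<^sup>L\<close> are \<open>O(M\<^sup>L)\<close>, which is stronger
  than the claimed bound.\<close>

no_notation Matrix.vec_index (infixl \<open>$\<close> 100)
hide_const (open) Matrix.mat Matrix.vec

lemma mult_vec2_nth: "((A::complex^2^2) *v x) $ r = A$r$1 * x$1 + A$r$2 * x$2"
  by (simp add: matrix_vector_mult_def sum_2)

lemma norm_vec2_power2: "norm (x::complex^2) ^ 2 = cmod (x$1) ^ 2 + cmod (x$2) ^ 2"
  by (simp add: norm_vec_def L2_set_def sum_2)

lemma norm_vec2_le: "norm (x::complex^2) \<le> cmod (x$1) + cmod (x$2)"
  by (rule power2_le_imp_le) (simp_all add: norm_vec2_power2 power2_sum)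

lemma U2_norm_mult:
  assumes "U \<in> U2" shows "norm (U *v x) = norm (x::complex^2)"
proof -
  have "adj2 U ** U = mat 1" using assms by (simp add: U2_def)
  then have "(adj2 U ** U) $ i $ j = (if i = j then 1 else 0)" for i j
    by (simp add: Finite_Cartesian_Product.mat_def)
  from this[of 1 1] this[of 1 2] this[of 2 1] this[of 2 2]
  have h11: "cnj (U$1$1) * U$1$1 + cnj (U$2$1) * U$2$1 = 1"
    and h12: "cnj (U$1$1) * U$1$2 + cnj (U$2$1) * U$2$2 = 0"
    and h21: "cnj (U$1$2) * U$1$1 + cnj (U$2$2) * U$2$1 = 0"
    and h22: "cnj (U$1$2) * U$1$2 + cnj (U$2$2) * U$2$2 = 1"
    by (simp_all add: matrix_matrix_mult_def sum_2 adj2_def)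
  let ?a = "U$1$1" and ?b = "U$1$2" and ?c = "U$2$1" and ?d = "U$2$2" and ?p = "x$1" and ?q = "x$2"
  have "(?a * ?p + ?b * ?q) * (cnj ?a * cnj ?p + cnj ?b * cnj ?q) +
          (?c * ?p + ?d * ?q) * (cnj ?c * cnj ?p + cnj ?d * cnj ?q) =
        ?p * cnj ?p * (cnj ?a * ?a + cnj ?c * ?c) + ?q * cnj ?q * (cnj ?b * ?b + cnj ?d * ?d)
          + ?p * cnj ?q * (cnj ?b * ?a + cnj ?d * ?c) + ?q * cnj ?p * (cnj ?a * ?b + cnj ?c * ?d)"
    by (simp add: algebra_simps)
  also have "\<dots> = ?p * cnj ?p + ?q * cnj ?q"
    using h11 h12 h21 h22 by simp
  finally have "complex_of_real (norm (U *v x) ^ 2) = complex_of_real (norm x ^ 2)"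
    unfolding norm_vec2_power2 of_real_add complex_norm_square mult_vec2_nth
      complex_cnj_add complex_cnj_mult .
  then have "norm (U *v x) ^ 2 = norm x ^ 2"
    using of_real_eq_iff by blast
  then show ?thesis
    by (simp add: power2_eq_iff_nonneg)
qed

lemma sum_shift_support:
  fixes g :: "int \<Rightarrow> real"
  assumes support: "\<And>n. g n \<noteq> 0 \<Longrightarrow> \<bar>n\<bar> < K" and "\<bar>d\<bar> \<le> 1"
  shows "(\<Sum>n\<in>{-K..K}. g (n + d)) = (\<Sum>n\<in>{-K..K}. g n)"
proof -
  have "(\<Sum>n\<in>{-K..K}. g (n + d)) = (\<Sum>m\<in>{-K+d..K+d}. g m)"
    by (rule sum.reindex_bij_witness[of _ "\<lambda>m. m - d" "\<lambda>n. n + d"]) auto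
  also have "\<dots> = (\<Sum>m\<in>{-K+1..K-1}. g m)"
    by (rule sum.mono_neutral_right) (use assms in \<open>force+\<close>)
  also have "\<dots> = (\<Sum>m\<in>{-K..K}. g m)"
    by (rule sum.mono_neutral_left) (use support in \<open>force+\<close>)
  finally show ?thesis .
qed

lemma mult_mat_vec_smult_left:
  fixes A :: "'a :: comm_ring_1 mat"
  shows "A \<in> carrier_mat n n \<Longrightarrow> v \<in> carrier_vec n \<Longrightarrow> (a \<cdot>\<^sub>m A) *\<^sub>v v = a \<cdot>\<^sub>v (A *\<^sub>v v)"
  by (rule eq_vecI) (auto simp: carrier_matD carrier_vecD)

lemma pow_mat_smult:
  fixes A :: "'a :: comm_ring_1 mat"
  shows "A \<in> carrier_mat n n \<Longrightarrow> (a \<cdot>\<^sub>m A) ^\<^sub>m k = a ^ k \<cdot>\<^sub>m A ^\<^sub>m k"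
proof (induction k)
  case 0
  then show ?case by (intro eq_matI) auto
next
  case (Suc k)
  then show ?case
    by (intro eq_matI) (auto simp: algebra_simps carrier_matD)
qed

lemma spectral_radius_less_power_bound:
  fixes A :: "complex mat"
  assumes A: "A \<in> carrier_mat n n" and "0 < n" and radius: "spectral_radius A < M"
  shows "\<exists>c. \<forall>k. norm_bound (A ^\<^sub>m k) (c * M ^ k)"
proof -
  have "0 \<le> spectral_radius A"
    using spectral_radius_mem_max(1)[OF A \<open>0 < n\<close>] by auto
  with radius have "0 < M" by linarith
  define B where "B = complex_of_real (1 / M) \<cdot>\<^sub>m A"
  have B: "B \<in> carrier_mat n n" by (simp add: B_def A)
  have A_eq: "A = complex_of_real M \<cdot>\<^sub>m B"
    using \<open>0 < M\<close> by (intro eq_matI) (auto simp: B_def)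
  have "spectral_radius B < 1"
  proof -
    obtain z where z: "z \<in> spectrum B" "spectral_radius B = cmod z"
      using spectral_radius_mem_max(1)[OF B \<open>0 < n\<close>] by auto
    then obtain v where v: "eigenvector B v z"
      by (auto simp: spectrum_def eigenvalue_def)
    then have "eigenvector A v (complex_of_real M * z)"
      using A B by (auto simp: eigenvector_def A_eq mult_mat_vec_smult_left smult_smult_assoc)
    then have "complex_of_real M * z \<in> spectrum A"
      by (auto simp: spectrum_def eigenvalue_def)
    then have "norm (complex_of_real M * z) \<le> spectral_radius A"
      by (intro spectral_radius_mem_max(2)[OF A \<open>0 < n\<close>]) auto
    then have "M * cmod z < M * 1"
      using radius unfolding norm_mult norm_of_real abs_of_pos[OF \<open>0 < M\<close>] by linarith
    then show ?thesis
      using z \<open>0 < M\<close> by (simp only: mult_less_cancel_left_pos)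
  qed
  then obtain c where c: "\<forall>k. norm_bound (B ^\<^sub>m k) c"
    using spectral_radius_jnf_norm_bound_less_1_upper_triangular[OF B] by blast
  have "norm_bound (A ^\<^sub>m k) (c * M ^ k)" for k
  proof
    fix i j assume "i < dim_row (A ^\<^sub>m k)" "j < dim_col (A ^\<^sub>m k)"
    then have ij: "i < n" "j < n" using pow_mat_dim_square[OF A] by auto
    have "(A ^\<^sub>m k) $$ (i, j) = complex_of_real (M ^ k) * (B ^\<^sub>m k) $$ (i, j)"
      unfolding A_eq pow_mat_smult[OF B] using ij B by simp
    moreover have "cmod ((B ^\<^sub>m k) $$ (i, j)) \<le> c"
      using c ij B by (auto simp: norm_bound_def)
    ultimately show "cmod ((A ^\<^sub>m k) $$ (i, j)) \<le> c * M ^ k"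
      using \<open>0 < M\<close> by (simp add: norm_mult norm_power mult.commute mult_left_mono)
  qed
  then show ?thesis by blast
qed

lemma qw_evol_nth_1: "qw_evol U \<Psi> n $ 1 = (U (n+1) *v \<Psi> (n+1)) $ 1"
  unfolding qw_evol_def Pmat_def Qmat_def
  by (simp add: matrix_vector_mul_assoc[symmetric] mult_vec2_nth projP_def projQ_def)

lemma qw_evol_nth_2: "qw_evol U \<Psi> n $ 2 = (U (n-1) *v \<Psi> (n-1)) $ 2"
  unfolding qw_evol_def Pmat_def Qmat_def
  by (simp add: matrix_vector_mul_assoc[symmetric] mult_vec2_nth projP_def projQ_def)

lemma qw_evol_mass_conservation:
  assumes unitary: "\<forall>n. U n \<in> U2" and support: "\<And>n. \<Psi> n \<noteq> 0 \<Longrightarrow> \<bar>n\<bar> < K"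
  shows "(\<Sum>n\<in>{-K..K}. norm (qw_evol U \<Psi> n) ^ 2) = (\<Sum>n\<in>{-K..K}. norm (\<Psi> n) ^ 2)"
proof -
  define w where "w n = U n *v \<Psi> n" for n
  have w_support: "w n $ k \<noteq> 0 \<Longrightarrow> \<bar>n\<bar> < K" for n k
    using support[of n] by (force simp: w_def)
  have "(\<Sum>n\<in>{-K..K}. norm (qw_evol U \<Psi> n) ^ 2) =
        (\<Sum>n\<in>{-K..K}. cmod (w (n + 1) $ 1) ^ 2) + (\<Sum>n\<in>{-K..K}. cmod (w (n + -1) $ 2) ^ 2)"
    by (simp add: norm_vec2_power2 qw_evol_nth_1 qw_evol_nth_2 w_def sum.distrib)
  also have "\<dots> = (\<Sum>n\<in>{-K..K}. cmod (w n $ 1) ^ 2) + (\<Sum>n\<in>{-K..K}. cmod (w n $ 2) ^ 2)"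
    using sum_shift_support[of "\<lambda>n. cmod (w n $ 1) ^ 2" K 1]
      sum_shift_support[of "\<lambda>n. cmod (w n $ 2) ^ 2" K "-1"] w_support by simp
  also have "\<dots> = (\<Sum>n\<in>{-K..K}. norm (\<Psi> n) ^ 2)"
    using unitary by (simp add: sum.distrib[symmetric] norm_vec2_power2[symmetric] w_def U2_norm_mult)
  finally show ?thesis .
qed

text \<open>Unitarity conserves the mass on the window \<open>\<bar>n\<bar> \<le> N + 1\<close>; inside the box it is
  multiplied by \<open>\<bar>z\<bar>\<^sup>2\<close>, and component 2 of site \<open>N\<close> has moved to site \<open>N + 1\<close>.\<close>
lemma qw_eigenstate_leak:
  assumes unitary: "\<forall>n. U n \<in> U2" and edge: "U (int N) = mat 1"
    and support: "\<And>n. \<Psi> n \<noteq> 0 \<Longrightarrow> \<bar>n\<bar> \<le> int N"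
    and eigen: "\<And>n. \<bar>n\<bar> \<le> int N \<Longrightarrow> qw_evol U \<Psi> n = z *s \<Psi> n"
  shows "cmod z ^ 2 * (\<Sum>n\<in>{-(int N + 1)..int N + 1}. norm (\<Psi> n) ^ 2) + cmod (\<Psi> (int N) $ 2) ^ 2
           \<le> (\<Sum>n\<in>{-(int N + 1)..int N + 1}. norm (\<Psi> n) ^ 2)"
proof -
  let ?R = "{-(int N + 1)..int N + 1}"
  have pointwise: "cmod z ^ 2 * norm (\<Psi> n) ^ 2
      + (if n = int N + 1 then cmod (\<Psi> (int N) $ 2) ^ 2 else 0) \<le> norm (qw_evol U \<Psi> n) ^ 2" for n
  proof (cases "\<bar>n\<bar> \<le> int N")
    case True
    then show ?thesis
      using eigen[OF True] by (simp add: norm_vec2_power2 norm_mult power_mult_distrib algebra_simps)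
  next
    case False
    then have "\<Psi> n = 0" using support by blast
    moreover have "qw_evol U \<Psi> (int N + 1) $ 2 = \<Psi> (int N) $ 2"
      using edge by (simp add: qw_evol_nth_2)
    ultimately show ?thesis
      by (auto simp: norm_vec2_power2)
  qed
  have "(\<Sum>n\<in>?R. cmod z ^ 2 * norm (\<Psi> n) ^ 2
      + (if n = int N + 1 then cmod (\<Psi> (int N) $ 2) ^ 2 else 0)) \<le> (\<Sum>n\<in>?R. norm (qw_evol U \<Psi> n) ^ 2)"
    by (rule sum_mono) (rule pointwise)
  also have "\<dots> = (\<Sum>n\<in>?R. norm (\<Psi> n) ^ 2)"
    using qw_evol_mass_conservation[OF unitary, of \<Psi> "int N + 1"] support by force
  finally show ?thesis
    by (simp add: sum.distrib sum_distrib_left)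
qed

text \<open>Read the eigenvalue equation from the right edge leftwards: component 1 at \<open>n - 1\<close> is fed
  only by site \<open>n\<close>, and component 2 at \<open>n\<close> only by site \<open>n - 1\<close>, through the nonzero
  diagonal entry of \<open>U (n - 1)\<close>.\<close>
lemma qw_eigenstate_vanishes:
  assumes diag: "\<And>n. U n $ 2 $ 2 \<noteq> 0" and "z \<noteq> 0"
    and support: "\<And>n. \<Psi> n \<noteq> 0 \<Longrightarrow> \<bar>n\<bar> \<le> int N"
    and eigen: "\<And>n. \<bar>n\<bar> \<le> int N \<Longrightarrow> qw_evol U \<Psi> n = z *s \<Psi> n"
    and no_leak: "\<Psi> (int N) $ 2 = 0"
  shows "\<Psi> n = 0"
proof -
  have "\<forall>m\<ge>n. \<Psi> m = 0" if "n \<le> int N + 1" for n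
    using that
  proof (induction n rule: int_le_induct)
    case base
    then show ?case using support by force
  next
    case (step n)
    then have right: "\<Psi> n = 0" by blast
    have "\<Psi> (n - 1) = 0"
    proof (cases "\<bar>n - 1\<bar> \<le> int N")
      case False
      then show ?thesis using support by blast
    next
      case inside: True
      have "z * \<Psi> (n - 1) $ 1 = 0"
        using arg_cong[OF eigen[OF inside], of "\<lambda>v. v $ 1"] right by (simp add: qw_evol_nth_1)
      then have first: "\<Psi> (n - 1) $ 1 = 0"
        using \<open>z \<noteq> 0\<close> by simp
      have second: "\<Psi> (n - 1) $ 2 = 0"
      proof (cases "n - 1 = int N")
        case True
        then show ?thesis using no_leak by simp
      next
        case False
        then have "\<bar>n\<bar> \<le> int N" using inside by linarith
        then have "U (n - 1) $ 2 $ 2 * \<Psi> (n - 1) $ 2 = 0"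
          using arg_cong[OF eigen, of n "\<lambda>v. v $ 2"] right first by (simp add: qw_evol_nth_2 mult_vec2_nth)
        then show ?thesis using diag by simp
      qed
      show ?thesis
        using first second by (simp add: Finite_Cartesian_Product.vec_eq_iff forall_2)
    qed
    have "\<Psi> m = 0" if "n - 1 \<le> m" for m
      using that \<open>\<Psi> (n - 1) = 0\<close> step.IH by (cases "m = n - 1") auto
    then show ?case by blast
  qed
  then show ?thesis
    using support[of n] by (cases "n \<le> int N + 1") auto
qed

lemma qw_eigenvalue_norm_less_1:
  assumes S: "\<forall>n. U n \<in> classS" and identity: "\<forall>n. \<bar>n\<bar> \<ge> int N \<longrightarrow> U n = mat 1"
    and support: "\<And>n. \<Psi> n \<noteq> 0 \<Longrightarrow> \<bar>n\<bar> \<le> int N" and nonzero: "\<Psi> n0 \<noteq> 0"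
    and eigen: "\<And>n. \<bar>n\<bar> \<le> int N \<Longrightarrow> qw_evol U \<Psi> n = z *s \<Psi> n"
  shows "cmod z < 1"
proof -
  have unitary: "\<forall>n. U n \<in> U2"
    using S by (simp add: classS_def)
  have diag: "U n $ 2 $ 2 \<noteq> 0" for n
    using S[rule_format, of n] by (auto simp: classS_def)
  define mass where "mass = (\<Sum>n\<in>{-(int N + 1)..int N + 1}. norm (\<Psi> n) ^ 2)"
  have leak: "cmod z ^ 2 * mass + cmod (\<Psi> (int N) $ 2) ^ 2 \<le> mass"
    unfolding mass_def using qw_eigenstate_leak[OF unitary _ support eigen] identity by simp
  have "norm (\<Psi> n0) ^ 2 \<le> mass"
    unfolding mass_def using support[OF nonzero] by (intro member_le_sum) auto
  then have "mass > 0"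
    using nonzero by (smt (verit) zero_less_power2 norm_eq_zero)
  with leak have "cmod z ^ 2 \<le> 1"
    by (smt (verit) mult_le_cancel_right2 zero_le_power2)
  then have "cmod z \<le> 1"
    by (simp add: power_le_one_iff)
  moreover have "cmod z \<noteq> 1"
  proof
    assume "cmod z = 1"
    with leak have "\<Psi> (int N) $ 2 = 0"
      by simp
    with \<open>cmod z = 1\<close> have "\<Psi> n0 = 0"
      using qw_eigenstate_vanishes[OF diag _ support eigen] by force
    with nonzero show False ..
  qed
  ultimately show ?thesis
    by simp
qed

text \<open>The sites \<open>-N..N\<close> with their two components are encoded in \<open>\<complex>^(4N+2)\<close>, component
  \<open>c\<close> of site \<open>n\<close> at index \<open>2(n+N)+c\<close>. Component 1 moves left and component 2 moves right,
  so \<open>box_source N i\<close> is the site from which index \<open>i\<close> is fed.\<close>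

definition box_dim :: "nat \<Rightarrow> nat" where
  "box_dim N = 4 * N + 2"

definition box_site :: "nat \<Rightarrow> nat \<Rightarrow> int" where
  "box_site N i = int (i div 2) - int N"

definition box_comp :: "nat \<Rightarrow> 2" where
  "box_comp c = (if c = 0 then 1 else 2)"

definition box_index :: "nat \<Rightarrow> int \<Rightarrow> nat \<Rightarrow> nat" where
  "box_index N n c = 2 * nat (n + int N) + c"

definition box_source :: "nat \<Rightarrow> nat \<Rightarrow> int" where
  "box_source N i = (if i mod 2 = 0 then box_site N i + 1 else box_site N i - 1)"

definition box_vec :: "nat \<Rightarrow> (int \<Rightarrow> complex^2) \<Rightarrow> complex Matrix.vec" where
  "box_vec N \<Psi> = Matrix.vec (box_dim N) (\<lambda>i. \<Psi> (box_site N i) $ box_comp (i mod 2))"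

definition box_state :: "nat \<Rightarrow> complex Matrix.vec \<Rightarrow> int \<Rightarrow> complex^2" where
  "box_state N v n =
     (if \<bar>n\<bar> \<le> int N then (\<chi> k. vec_index v (box_index N n (if k = 1 then 0 else 1))) else 0)"

definition box_transfer :: "(int \<Rightarrow> complex^2^2) \<Rightarrow> nat \<Rightarrow> complex Matrix.mat" where
  "box_transfer U N = Matrix.mat (box_dim N) (box_dim N) (\<lambda>(i, j).
     if \<bar>box_source N i\<bar> \<le> int N \<and> box_site N j = box_source N i
     then U (box_source N i) $ box_comp (i mod 2) $ box_comp (j mod 2) else 0)"

definition no_inflow :: "nat \<Rightarrow> (int \<Rightarrow> complex^2) \<Rightarrow> bool" where
  "no_inflow N \<Psi> \<longleftrightarrow> (\<forall>n > int N. \<Psi> n $ 1 = 0) \<and> (\<forall>n < - int N. \<Psi> n $ 2 = 0)"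

lemma box_index_less: "\<bar>n\<bar> \<le> int N \<Longrightarrow> c < 2 \<Longrightarrow> box_index N n c < box_dim N"
  unfolding box_index_def box_dim_def by linarith

lemma box_site_index: "\<bar>n\<bar> \<le> int N \<Longrightarrow> c < 2 \<Longrightarrow> box_site N (box_index N n c) = n"
  unfolding box_index_def box_site_def by auto

lemma box_index_mod: "c < 2 \<Longrightarrow> box_index N n c mod 2 = c"
  unfolding box_index_def by auto

lemma box_index_site: "box_index N (box_site N i) (i mod 2) = i"
  unfolding box_index_def box_site_def by auto

lemma box_site_bound: "i < box_dim N \<Longrightarrow> \<bar>box_site N i\<bar> \<le> int N"
  unfolding box_site_def box_dim_def by auto

lemma dim_box_vec [simp]: "dim_vec (box_vec N \<Psi>) = box_dim N"
  by (simp add: box_vec_def)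

lemma box_vec_carrier [simp]: "box_vec N \<Psi> \<in> carrier_vec (box_dim N)"
  by (simp add: box_vec_def)

lemma dim_box_transfer [simp]:
  "dim_row (box_transfer U N) = box_dim N" "dim_col (box_transfer U N) = box_dim N"
  by (simp_all add: box_transfer_def)

lemma box_transfer_carrier [simp]: "box_transfer U N \<in> carrier_mat (box_dim N) (box_dim N)"
  by (simp add: carrier_matI)

lemma box_vec_index:
  "\<bar>n\<bar> \<le> int N \<Longrightarrow> c < 2 \<Longrightarrow> vec_index (box_vec N \<Psi>) (box_index N n c) = \<Psi> n $ box_comp c"
  by (simp add: box_vec_def box_index_less box_site_index box_index_mod)

lemma box_vec_box_state: "v \<in> carrier_vec (box_dim N) \<Longrightarrow> box_vec N (box_state N v) = v"
proof (rule eq_vecI)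
  fix i assume "v \<in> carrier_vec (box_dim N)" and "i < dim_vec v"
  then have i: "i < box_dim N" by simp
  have "box_state N v (box_site N i) $ box_comp (i mod 2) = vec_index v (box_index N (box_site N i) (i mod 2))"
    using box_site_bound[OF i] by (auto simp: box_state_def box_comp_def)
  then show "vec_index (box_vec N (box_state N v)) i = vec_index v i"
    using i by (simp add: box_vec_def box_index_site)
qed simp

lemma box_indices_at_site:
  assumes "\<bar>n\<bar> \<le> int N"
  shows "{j \<in> {0..<box_dim N}. box_site N j = n} = {box_index N n 0, box_index N n 1}"
proof (intro equalityI subsetI)
  fix j assume "j \<in> {j \<in> {0..<box_dim N}. box_site N j = n}"
  then have "j = box_index N n (j mod 2)"
    using box_index_site[of N j] by simp
  moreover have "j mod 2 = 0 \<or> j mod 2 = 1" by auto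
  ultimately show "j \<in> {box_index N n 0, box_index N n 1}" by auto
qed (use assms box_index_less box_site_index in auto)

lemma qw_evol_box_component:
  "qw_evol U \<Psi> (box_site N i) $ box_comp (i mod 2)
     = (U (box_source N i) *v \<Psi> (box_source N i)) $ box_comp (i mod 2)"
  by (cases "i mod 2 = 0") (auto simp: box_comp_def box_source_def qw_evol_nth_1 qw_evol_nth_2)

lemma box_transfer_mult_vec_index:
  assumes i: "i < box_dim N"
  shows "vec_index (box_transfer U N *\<^sub>v box_vec N \<Psi>) i =
    (if \<bar>box_source N i\<bar> \<le> int N then (U (box_source N i) *v \<Psi> (box_source N i)) $ box_comp (i mod 2) else 0)"
proof -
  let ?m = "box_source N i" and ?r = "box_comp (i mod 2)"
  let ?f = "\<lambda>j. U ?m $ ?r $ box_comp (j mod 2) * \<Psi> ?m $ box_comp (j mod 2)"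
  have "vec_index (box_transfer U N *\<^sub>v box_vec N \<Psi>) i =
      (\<Sum>j\<in>{0..<box_dim N}. if \<bar>?m\<bar> \<le> int N \<and> box_site N j = ?m then ?f j else 0)"
    using i by (auto simp: box_transfer_def box_vec_def scalar_prod_def intro: sum.cong)
  also have "\<dots> = (if \<bar>?m\<bar> \<le> int N then (U ?m *v \<Psi> ?m) $ ?r else 0)"
  proof (cases "\<bar>?m\<bar> \<le> int N")
    case True
    have "(\<Sum>j\<in>{0..<box_dim N}. if box_site N j = ?m then ?f j else 0) =
        (\<Sum>j\<in>{j \<in> {0..<box_dim N}. box_site N j = ?m}. ?f j)"
      by (rule sum.inter_filter[symmetric]) simp
    also have "\<dots> = (\<Sum>j\<in>{box_index N ?m 0, box_index N ?m 1}. ?f j)"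
      by (simp only: box_indices_at_site[OF True])
    also have "\<dots> = ?f (box_index N ?m 0) + ?f (box_index N ?m 1)"
      by (simp add: box_index_def)
    finally show ?thesis
      using True by (simp add: box_index_mod box_comp_def mult_vec2_nth)
  qed simp
  finally show ?thesis .
qed

lemma box_vec_qw_evol:
  assumes "no_inflow N \<Psi>" and "U (int N + 1) = mat 1" and "U (- int N - 1) = mat 1"
  shows "box_vec N (qw_evol U \<Psi>) = box_transfer U N *\<^sub>v box_vec N \<Psi>"
proof (rule eq_vecI)
  fix i assume "i < dim_vec (box_transfer U N *\<^sub>v box_vec N \<Psi>)"
  then have i: "i < box_dim N" by (simp add: box_transfer_def)
  have "\<bar>box_source N i\<bar> \<le> int N \<or> (box_source N i = int N + 1 \<and> i mod 2 = 0)
      \<or> (box_source N i = - int N - 1 \<and> i mod 2 = 1)"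
    using box_site_bound[OF i] by (auto simp: box_source_def)
  then have "(U (box_source N i) *v \<Psi> (box_source N i)) $ box_comp (i mod 2) =
      (if \<bar>box_source N i\<bar> \<le> int N then (U (box_source N i) *v \<Psi> (box_source N i)) $ box_comp (i mod 2) else 0)"
    using assms by (auto simp: no_inflow_def box_comp_def)
  moreover have "vec_index (box_vec N (qw_evol U \<Psi>)) i =
      (U (box_source N i) *v \<Psi> (box_source N i)) $ box_comp (i mod 2)"
    using i by (simp add: box_vec_def qw_evol_box_component)
  ultimately show "vec_index (box_vec N (qw_evol U \<Psi>)) i = vec_index (box_transfer U N *\<^sub>v box_vec N \<Psi>) i"
    using box_transfer_mult_vec_index[OF i] by simp
qed (simp add: box_transfer_def)

lemma no_inflow_qw_evol:
  assumes identity: "\<forall>n. \<bar>n\<bar> \<ge> int N \<longrightarrow> U n = mat 1" and "no_inflow N \<Psi>"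
  shows "no_inflow N (qw_evol U \<Psi>)"
  using assms unfolding no_inflow_def by (simp add: qw_evol_nth_1 qw_evol_nth_2)

lemma box_vec_qw_evol_iterate:
  assumes identity: "\<forall>n. \<bar>n\<bar> \<ge> int N \<longrightarrow> U n = mat 1" and "no_inflow N \<Psi>"
  shows "box_vec N ((qw_evol U ^^ L) \<Psi>) = box_transfer U N ^\<^sub>m L *\<^sub>v box_vec N \<Psi>"
  using \<open>no_inflow N \<Psi>\<close>
proof (induction L arbitrary: \<Psi>)
  case 0
  then show ?case by simp
next
  case (Suc L)
  have "box_vec N ((qw_evol U ^^ Suc L) \<Psi>) = box_vec N ((qw_evol U ^^ L) (qw_evol U \<Psi>))"
    by (simp only: funpow_Suc_right o_apply)
  also have "\<dots> = box_transfer U N ^\<^sub>m L *\<^sub>v (box_transfer U N *\<^sub>v box_vec N \<Psi>)"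
    using Suc no_inflow_qw_evol[OF identity] box_vec_qw_evol identity by simp
  also have "\<dots> = box_transfer U N ^\<^sub>m Suc L *\<^sub>v box_vec N \<Psi>"
    by (simp add: assoc_mult_mat_vec[symmetric, of _ "box_dim N" "box_dim N" _ "box_dim N"] del: assoc_mult_mat_vec)
  finally show ?case .
qed

lemma box_transfer_eigenvalue_norm_less_1:
  assumes S: "\<forall>n. U n \<in> classS" and identity: "\<forall>n. \<bar>n\<bar> \<ge> int N \<longrightarrow> U n = mat 1"
    and "eigenvalue (box_transfer U N) z"
  shows "cmod z < 1"
proof -
  obtain v where v: "v \<in> carrier_vec (box_dim N)" "v \<noteq> 0\<^sub>v (box_dim N)"
      and transfer: "box_transfer U N *\<^sub>v v = z \<cdot>\<^sub>v v"
    using assms(3) by (auto simp: eigenvalue_def eigenvector_def box_transfer_def)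
  define \<Psi> where "\<Psi> = box_state N v"
  have box_vec_\<Psi>: "box_vec N \<Psi> = v"
    unfolding \<Psi>_def by (rule box_vec_box_state[OF v(1)])
  have support: "\<And>n. \<Psi> n \<noteq> 0 \<Longrightarrow> \<bar>n\<bar> \<le> int N"
    by (auto simp: \<Psi>_def box_state_def split: if_splits)
  obtain i where "i < box_dim N" "vec_index v i \<noteq> 0"
    using v by (auto simp: Matrix.vec_eq_iff)
  then have nonzero: "\<Psi> (box_site N i) \<noteq> 0"
    using box_vec_\<Psi> by (auto simp: box_vec_def)
  have "no_inflow N \<Psi>"
    unfolding no_inflow_def
  proof (intro conjI allI impI)
    fix n :: int
    show "n > int N \<Longrightarrow> \<Psi> n $ 1 = 0" and "n < - int N \<Longrightarrow> \<Psi> n $ 2 = 0"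
      using support[of n] by fastforce+
  qed
  then have evolved: "box_vec N (qw_evol U \<Psi>) = z \<cdot>\<^sub>v box_vec N \<Psi>"
    using box_vec_qw_evol identity transfer box_vec_\<Psi> by simp
  have eigen: "qw_evol U \<Psi> n = z *s \<Psi> n" if n: "\<bar>n\<bar> \<le> int N" for n
  proof -
    have "qw_evol U \<Psi> n $ box_comp c = z * \<Psi> n $ box_comp c" if "c < 2" for c
      using arg_cong[OF evolved, of "\<lambda>w. vec_index w (box_index N n c)"] box_vec_index[OF n that]
        box_index_less[OF n that] by simp
    from this[of 0] this[of 1] show ?thesis
      by (simp add: box_comp_def Finite_Cartesian_Product.vec_eq_iff forall_2)
  qed
  show ?thesis
    using qw_eigenvalue_norm_less_1[OF S identity support nonzero eigen] .
qed

lemma box_transfer_power_decay: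
  assumes "\<forall>n. U n \<in> classS" and "\<forall>n. \<bar>n\<bar> \<ge> int N \<longrightarrow> U n = mat 1"
  shows "\<exists>c M. 0 < M \<and> M < 1 \<and> (\<forall>k. norm_bound (box_transfer U N ^\<^sub>m k) (c * M ^ k))"
proof -
  let ?T = "box_transfer U N"
  have dim: "0 < box_dim N" by (simp add: box_dim_def)
  obtain z where "z \<in> spectrum ?T" and radius: "spectral_radius ?T = cmod z"
    using spectral_radius_mem_max(1)[OF box_transfer_carrier dim] by auto
  then have "spectral_radius ?T < 1" "0 \<le> spectral_radius ?T"
    using box_transfer_eigenvalue_norm_less_1[OF assms] radius by (simp_all add: spectrum_def)
  define M where "M = (spectral_radius ?T + 1) / 2"
  have "0 < M" "M < 1" "spectral_radius ?T < M"
    using \<open>spectral_radius ?T < 1\<close> \<open>0 \<le> spectral_radius ?T\<close> by (simp_all add: M_def)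
  with spectral_radius_less_power_bound[OF box_transfer_carrier dim] show ?thesis
    by blast
qed

lemma box_vec_psi1: "box_vec N (psi1 N) = unit_vec (box_dim N) (box_index N (int N) 0)"
proof (rule eq_vecI)
  fix i assume "i < dim_vec (unit_vec (box_dim N) (box_index N (int N) 0))"
  then have i: "i < box_dim N" by simp
  have "(box_site N i = int N \<and> i mod 2 = 0) \<longleftrightarrow> i = box_index N (int N) 0"
    using box_index_site[of N i] box_site_index[of "int N" N 0] box_index_mod[of 0 N "int N"] by auto
  then show "vec_index (box_vec N (psi1 N)) i = vec_index (unit_vec (box_dim N) (box_index N (int N) 0)) i"
    using i by (auto simp: box_vec_def psi1_def box_comp_def unit_vec_def)
qed simp

lemma box_vec_psi2: "box_vec N (psi2 N) = unit_vec (box_dim N) (box_index N (- int N) 1)"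
proof (rule eq_vecI)
  fix i assume "i < dim_vec (unit_vec (box_dim N) (box_index N (- int N) 1))"
  then have i: "i < box_dim N" by simp
  have "(box_site N i = - int N \<and> i mod 2 = 1) \<longleftrightarrow> i = box_index N (- int N) 1"
    using box_index_site[of N i] box_site_index[of "- int N" N 1] box_index_mod[of 1 N "- int N"] by auto
  then show "vec_index (box_vec N (psi2 N)) i = vec_index (unit_vec (box_dim N) (box_index N (- int N) 1)) i"
    using i by (auto simp: box_vec_def psi2_def box_comp_def unit_vec_def)
qed simp

lemma no_inflow_psi1: "no_inflow N (psi1 N)"
  by (simp add: no_inflow_def psi1_def)

lemma no_inflow_psi2: "no_inflow N (psi2 N)"
  by (simp add: no_inflow_def psi2_def)

lemma qw_evol_iterate_norm_bound:
  assumes identity: "\<forall>n. \<bar>n\<bar> \<ge> int N \<longrightarrow> U n = mat 1"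
    and bound: "\<forall>k. norm_bound (box_transfer U N ^\<^sub>m k) (c * M ^ k)"
    and "no_inflow N \<Psi>" and j: "box_vec N \<Psi> = unit_vec (box_dim N) j" "j < box_dim N"
    and n: "\<bar>n\<bar> \<le> int N"
  shows "norm ((qw_evol U ^^ L) \<Psi> n) \<le> 2 * c * M ^ L"
proof -
  have "cmod ((qw_evol U ^^ L) \<Psi> n $ box_comp k) \<le> c * M ^ L" if k: "k < 2" for k
  proof -
    have "(qw_evol U ^^ L) \<Psi> n $ box_comp k = vec_index (box_vec N ((qw_evol U ^^ L) \<Psi>)) (box_index N n k)"
      using box_vec_index[OF n k] by simp
    also have "\<dots> = vec_index (box_transfer U N ^\<^sub>m L *\<^sub>v unit_vec (box_dim N) j) (box_index N n k)"
      using box_vec_qw_evol_iterate[OF identity \<open>no_inflow N \<Psi>\<close>] j by simp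
    also have "\<dots> = (box_transfer U N ^\<^sub>m L) $$ (box_index N n k, j)"
      using box_index_less[OF n k] j(2) pow_mat_dim_square[OF box_transfer_carrier]
      by (simp add: index_mult_mat_vec)
    finally show ?thesis
      using bound box_index_less[OF n k] j(2) by (simp add: norm_bound_def)
  qed
  from this[of 0] this[of 1] show ?thesis
    using norm_vec2_le[of "(qw_evol U ^^ L) \<Psi> n"] by (simp add: box_comp_def)
qed

theorem mainTheorem2:
  fixes U :: "int \<Rightarrow> complex^2^2" and N0 :: nat
  assumes "N0 \<ge> 1"
    and "\<forall>n. U n \<in> classS"
    and "\<forall>n. \<bar>n\<bar> \<ge> int N0 \<longrightarrow> U n = mat 1"
  shows "\<exists>C M. C > 0 \<and> 0 < M \<and> M < 1 \<and>
    (\<forall>\<Psi>\<in>{psi1 N0, psi2 N0}. \<forall>n L. \<bar>n\<bar> \<le> int N0 \<and> L \<ge> 1 \<longrightarrow>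
       norm (((qw_evol U) ^^ L) \<Psi> n) \<le> C * real L ^ (2 * N0 - 1) * M ^ L)"
proof -
  obtain c M where M: "0 < M" "M < 1" and bound: "\<forall>k. norm_bound (box_transfer U N0 ^\<^sub>m k) (c * M ^ k)"
    using box_transfer_power_decay[OF assms(2,3)] by blast
  define C where "C = 2 * \<bar>c\<bar> + 1"
  have "norm ((qw_evol U ^^ L) \<Psi> n) \<le> C * real L ^ (2 * N0 - 1) * M ^ L"
    if \<Psi>: "\<Psi> \<in> {psi1 N0, psi2 N0}" and n: "\<bar>n\<bar> \<le> int N0" and "L \<ge> 1" for \<Psi> n L
  proof -
    have "norm ((qw_evol U ^^ L) \<Psi> n) \<le> 2 * c * M ^ L"
      using \<Psi> qw_evol_iterate_norm_bound[OF assms(3) bound _ _ _ n] box_index_less[of _ N0]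
        no_inflow_psi1 no_inflow_psi2 box_vec_psi1 box_vec_psi2 by auto
    also have "\<dots> \<le> C * 1 * M ^ L"
      using M by (simp add: C_def)
    also have "\<dots> \<le> C * real L ^ (2 * N0 - 1) * M ^ L"
      using M \<open>L \<ge> 1\<close> by (intro mult_right_mono mult_left_mono) (auto simp: C_def)
    finally show ?thesis .
  qed
  moreover have "C > 0" by (simp add: C_def)
  ultimately show ?thesis
    using M by blast
qed

end
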